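(* Let $(G_k)_{k\in\mathbb Z}$ be a gibonacci sequence. For every positive integer $n$ and every integer $t$, \begin{equation*} \begin{split} 44\sum_{j = 1}^n G_{j + t}^5 &= -\left(G_{n + t + 3}^5 - G_{t + 3}^5\right) + 7\left(G_{n + t + 2}^5 - G_{t + 2}^5\right) + 47\left(G_{n + t + 1}^5 - G_{t + 1}^5\right)\\ &\qquad + 31\left(G_{n + t}^5 - G_t^5\right) - 9\left(G_{n + t - 1}^5 - G_{t - 1}^5\right) - \left(G_{n + t - 2}^5 - G_{t - 2}^5\right) \end{split} \end{equation*} and \begin{equation*} \begin{split} 44\sum_{j = 1}^n (-1)^{j - 1}G_{j + t}^5 &= -\left((-1)^{n + 1}G_{n + t + 3}^5 + G_{t + 3}^5\right) + 9\left((-1)^{n + 1}G_{n + t + 2}^5 + G_{t + 2}^5\right)\\ &\quad + 31\left((-1)^{n + 1}G_{n + t + 1}^5 + G_{t + 1}^5\right) - 47\left((-1)^{n + 1}G_{n + t}^5 + G_t^5\right)\\ &\quad + 7\left((-1)^{n + 1}G_{n + t - 1}^5 + G_{t - 1}^5\right) + \left((-1)^{n + 1}G_{n + t - 2}^5 + G_{t - 2}^5\right). \end{split} \end{equation*}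
   Context: A gibonacci sequence $(G_k)_{k\in\mathbb Z}$ is defined by arbitrary initial values $G_0=a$, $G_1=b$ (numbers, not both zero) and $G_k=G_{k-1}+G_{k-2}$ for all integers $k$ (equivalently $G_{-k}=G_{-(k-2)}-G_{-(k-1)}$ extends it to negative indices). *)

theory Defs
  imports Complex_Main
begin

definition gibonacci :: "(int \<Rightarrow> complex) \<Rightarrow> bool" where
  "gibonacci G \<longleftrightarrow> (G 0 \<noteq> 0 \<or> G 1 \<noteq> 0) \<and> (\<forall>k::int. G k = G (k - 1) + G (k - 2))"

end

theory Submission
  imports Defs
begin

text \<open>The fifth powers \<open>u k = G(k)^5\<close> of a gibonacci sequence satisfy the linear recurrence
  with characteristic polynomial \<open>p x = x^6 - 8x^5 - 40x^4 + 60x^3 + 40x^2 - 8x - 1\<close>, whose roots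
  are the products \<open>\<phi>^i \<psi>^(5-i)\<close>. Since \<open>p 1 = 44\<close> and \<open>p (-1) = -44\<close>, dividing \<open>p\<close> with
  remainder by \<open>x - 1\<close> and by \<open>x + 1\<close> yields combinations \<open>F\<close> and \<open>A\<close> of six
  consecutive fifth powers with \<open>F k - F (k - 1) = 44 u k\<close> and \<open>A k + A (k - 1) = 44 u k\<close>.
  The two sums therefore telescope, to \<open>F (n + t) - F t\<close> and to \<open>A t + (-1)^(n+1) A (n + t)\<close>.\<close>

lemma sum_telescope_int_shift:
  fixes f :: "int \<Rightarrow> 'a::ab_group_add"
  shows "(\<Sum>j=1..n. f (int j + t) - f (int j + t - 1)) = f (int n + t) - f t"
  by (induction n) (simp_all add: algebra_simps)

lemma sum_alternating_telescope_int_shift: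
  fixes f :: "int \<Rightarrow> 'a::comm_ring_1"
  shows "(\<Sum>j=1..n. (-1) ^ (j - 1) * (f (int j + t) + f (int j + t - 1)))
           = f t + (-1) ^ (n + 1) * f (int n + t)"
  by (induction n) (simp_all add: algebra_simps)

lemma gibonacci_recurrence:
  assumes "gibonacci G"
  shows "G (k + 2) = G (k + 1) + G k"
  using assms unfolding gibonacci_def by (metis add_diff_cancel_right' diff_diff_eq one_add_one)

lemma fibonacci_recurrence_window:
  fixes G :: "int \<Rightarrow> 'a::comm_ring_1"
  assumes rec: "\<And>k. G (k + 2) = G (k + 1) + G k"
  shows "G (k - 3) = 2 * G (k - 1) - G k"
    and "G (k - 2) = G k - G (k - 1)"
    and "G (k + 1) = G (k - 1) + G k"
    and "G (k + 2) = G (k - 1) + 2 * G k"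
    and "G (k + 3) = 2 * G (k - 1) + 3 * G k"
  using rec[of "k - 3"] rec[of "k - 2"] rec[of "k - 1"] rec[of k] rec[of "k + 1"]
  by (simp_all add: algebra_simps)

lemma fibonacci_fifth_power_recurrence:
  fixes G :: "int \<Rightarrow> 'a::comm_ring_1"
  assumes rec: "\<And>k. G (k + 2) = G (k + 1) + G k"
  shows "G (k + 3) ^ 5 - 8 * G (k + 2) ^ 5 - 40 * G (k + 1) ^ 5 + 60 * G k ^ 5
           + 40 * G (k - 1) ^ 5 - 8 * G (k - 2) ^ 5 - G (k - 3) ^ 5 = 0"
proof -
  define a b where "a = G (k - 1)" and "b = G k"
  have "(2 * a + 3 * b) ^ 5 - 8 * (a + 2 * b) ^ 5 - 40 * (a + b) ^ 5 + 60 * b ^ 5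
          + 40 * a ^ 5 - 8 * (b - a) ^ 5 - (2 * a - b) ^ 5 = 0"
    by (simp add: algebra_simps power_numeral_reduce)
  then show ?thesis
    unfolding a_def b_def fibonacci_recurrence_window[OF rec, of k] .
qed

definition fifth_power_primitive :: "(int \<Rightarrow> 'a::comm_ring_1) \<Rightarrow> int \<Rightarrow> 'a" where
  "fifth_power_primitive G k =
     - (G (k + 3) ^ 5) + 7 * G (k + 2) ^ 5 + 47 * G (k + 1) ^ 5 + 31 * G k ^ 5
     - 9 * G (k - 1) ^ 5 - G (k - 2) ^ 5"

definition alternating_fifth_power_primitive :: "(int \<Rightarrow> 'a::comm_ring_1) \<Rightarrow> int \<Rightarrow> 'a" where
  "alternating_fifth_power_primitive G k =
     - (G (k + 3) ^ 5) + 9 * G (k + 2) ^ 5 + 31 * G (k + 1) ^ 5 - 47 * G k ^ 5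
     + 7 * G (k - 1) ^ 5 + G (k - 2) ^ 5"

lemma fifth_power_primitive_diff:
  fixes G :: "int \<Rightarrow> 'a::comm_ring_1"
  assumes rec: "\<And>k. G (k + 2) = G (k + 1) + G k"
  shows "fifth_power_primitive G k - fifth_power_primitive G (k - 1) = 44 * G k ^ 5"
  using fibonacci_fifth_power_recurrence[OF rec, of k]
  by (simp add: fifth_power_primitive_def algebra_simps)

lemma alternating_fifth_power_primitive_add:
  fixes G :: "int \<Rightarrow> 'a::comm_ring_1"
  assumes rec: "\<And>k. G (k + 2) = G (k + 1) + G k"
  shows "alternating_fifth_power_primitive G k + alternating_fifth_power_primitive G (k - 1)
           = 44 * G k ^ 5"
  using fibonacci_fifth_power_recurrence[OF rec, of k]
  by (simp add: alternating_fifth_power_primitive_def algebra_simps)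

theorem proposition1:
  fixes G :: "int \<Rightarrow> complex" and n :: nat and t :: int
  assumes "gibonacci G" and "n \<ge> 1"
  shows "(44 * (\<Sum>j=1..n. G (int j + t) ^ 5) =
           - (G (int n + t + 3) ^ 5 - G (t + 3) ^ 5)
           + 7 * (G (int n + t + 2) ^ 5 - G (t + 2) ^ 5)
           + 47 * (G (int n + t + 1) ^ 5 - G (t + 1) ^ 5)
           + 31 * (G (int n + t) ^ 5 - G t ^ 5)
           - 9 * (G (int n + t - 1) ^ 5 - G (t - 1) ^ 5)
           - (G (int n + t - 2) ^ 5 - G (t - 2) ^ 5)) \<and>
         (44 * (\<Sum>j=1..n. (-1) ^ (j - 1) * G (int j + t) ^ 5) =
           - ((-1) ^ (n + 1) * G (int n + t + 3) ^ 5 + G (t + 3) ^ 5)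
           + 9 * ((-1) ^ (n + 1) * G (int n + t + 2) ^ 5 + G (t + 2) ^ 5)
           + 31 * ((-1) ^ (n + 1) * G (int n + t + 1) ^ 5 + G (t + 1) ^ 5)
           - 47 * ((-1) ^ (n + 1) * G (int n + t) ^ 5 + G t ^ 5)
           + 7 * ((-1) ^ (n + 1) * G (int n + t - 1) ^ 5 + G (t - 1) ^ 5)
           + ((-1) ^ (n + 1) * G (int n + t - 2) ^ 5 + G (t - 2) ^ 5))"
proof -
  have rec: "\<And>k. G (k + 2) = G (k + 1) + G k"
    using gibonacci_recurrence[OF assms(1)] .
  have "44 * (\<Sum>j=1..n. G (int j + t) ^ 5)
      = (\<Sum>j=1..n. fifth_power_primitive G (int j + t) - fifth_power_primitive G (int j + t - 1))"
    by (simp add: sum_distrib_left fifth_power_primitive_diff[OF rec])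
  also have "\<dots> = fifth_power_primitive G (int n + t) - fifth_power_primitive G t"
    by (rule sum_telescope_int_shift)
  finally have sum: "44 * (\<Sum>j=1..n. G (int j + t) ^ 5)
      = fifth_power_primitive G (int n + t) - fifth_power_primitive G t" .
  have "44 * (\<Sum>j=1..n. (-1) ^ (j - 1) * G (int j + t) ^ 5)
      = (\<Sum>j=1..n. (-1) ^ (j - 1) * (alternating_fifth_power_primitive G (int j + t)
                                       + alternating_fifth_power_primitive G (int j + t - 1)))"
    by (simp add: sum_distrib_left alternating_fifth_power_primitive_add[OF rec] algebra_simps)
  also have "\<dots> = alternating_fifth_power_primitive G t
                      + (-1) ^ (n + 1) * alternating_fifth_power_primitive G (int n + t)"
    by (rule sum_alternating_telescope_int_shift)
  finally have alternating_sum: "44 * (\<Sum>j=1..n. (-1) ^ (j - 1) * G (int j + t) ^ 5)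
      = alternating_fifth_power_primitive G t
        + (-1) ^ (n + 1) * alternating_fifth_power_primitive G (int n + t)" .
  show ?thesis
    unfolding sum alternating_sum fifth_power_primitive_def alternating_fifth_power_primitive_def
    by (simp add: algebra_simps)
qed

end
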